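(* Let $\kappa$ be a compact cardinal and let $\lambda\geq\kappa$ be a regular cardinal. Then there is no $\kappa$-regressive weak $\lambda$-Kurepa-tree.
   Context: A cardinal $\kappa$ is $\lambda$-compact if there is a $\kappa$-complete fine ultrafilter on $\mathcal{P}_\kappa\lambda=\{x\subseteq\lambda:|x|<\kappa\}$ (fine: for each $\alpha<\lambda$, $\{x:\alpha\in x\}$ is in the ultrafilter); $\kappa$ is compact if it is $\lambda$-compact for all $\lambda$. Trees are trees of functions: a tree $T$ is a set of functions whose domains are ordinals, closed under restriction, ordered by extension $\leq_T$; $T_\alpha$ is the set of elements with domain $\alpha$ and $T_{<\alpha}=\bigcup_{\xi<\alpha}T_\xi$. For a limit $\alpha$, $T_\alpha$ is non-stationary over $T_{<\alpha}$ if there is $f:T_\alpha\to T_{<\alpha}$ with $f(x)<_T x$ for all $x$ and, for distinct $x,y\in T_\alpha$, $f(x)\not<_T y$ or $f(y)\not<_T x$. A tree $T$ of height $\lambda$ is $\kappa$-regressive if $T_\alpha$ is non-stationary over $T_{<\alpha}$ for every limit $\alpha<\lambda$ with $\mathrm{cf}(\alpha)<\kappa$. A weak $\lambda$-Kurepa-tree is a tree of height $\lambda$ each of whose levels has size $\leq\lambda$ and which has $\lambda^+$ many cofinal branches. *)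

theory Defs
  imports Main
begin

definition card_le :: "'a set \<Rightarrow> 'b set \<Rightarrow> bool" where
  "card_le A B \<longleftrightarrow> (\<exists>f. inj_on f A \<and> f ` A \<subseteq> B)"

definition card_lt :: "'a set \<Rightarrow> 'b set \<Rightarrow> bool" where
  "card_lt A B \<longleftrightarrow> card_le A B \<and> \<not> card_le B A"

text \<open>Ordinals are modelled as elements of a well-ordered type 'o; the ordinal
  alpha is identified with the initial segment {..<alpha}.\<close>

definition is_cardinal :: "'o::wellorder \<Rightarrow> bool" where
  "is_cardinal k \<longleftrightarrow> (\<forall>b<k. card_lt {..<b} {..<k})"

definition is_limit :: "'o::wellorder \<Rightarrow> bool" where
  "is_limit a \<longleftrightarrow> (\<exists>b. b < a) \<and> (\<forall>b<a. \<exists>c. b < c \<and> c < a)"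

definition cofinal_in :: "'o::wellorder set \<Rightarrow> 'o \<Rightarrow> bool" where
  "cofinal_in C a \<longleftrightarrow> C \<subseteq> {..<a} \<and> (\<forall>b<a. \<exists>c\<in>C. b \<le> c)"

definition cf_less :: "'o::wellorder \<Rightarrow> 'o \<Rightarrow> bool" where
  "cf_less a k \<longleftrightarrow> (\<exists>C. cofinal_in C a \<and> card_lt C {..<k})"

definition regular_cardinal :: "'o::wellorder \<Rightarrow> bool" where
  "regular_cardinal l \<longleftrightarrow> is_cardinal l \<and> (\<exists>b. b < l) \<and>
     (\<forall>C. cofinal_in C l \<longrightarrow> card_le {..<l} C)"

definition uncountable_ord :: "'o::wellorder \<Rightarrow> bool" where
  "uncountable_ord k \<longleftrightarrow> \<not> card_le {..<k} (UNIV :: nat set)"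

definition P_kappa :: "'o::wellorder \<Rightarrow> 'b set \<Rightarrow> 'b set set" where
  "P_kappa k X = {x. x \<subseteq> X \<and> card_lt x {..<k}}"

definition ultrafilter_on :: "'c set \<Rightarrow> 'c set set \<Rightarrow> bool" where
  "ultrafilter_on S U \<longleftrightarrow> U \<subseteq> Pow S \<and> S \<in> U \<and> {} \<notin> U \<and>
     (\<forall>A B. A \<in> U \<and> A \<subseteq> B \<and> B \<subseteq> S \<longrightarrow> B \<in> U) \<and>
     (\<forall>A B. A \<in> U \<and> B \<in> U \<longrightarrow> A \<inter> B \<in> U) \<and>
     (\<forall>A. A \<subseteq> S \<longrightarrow> A \<in> U \<or> S - A \<in> U)"

definition complete_filter :: "'o::wellorder \<Rightarrow> 'c set set \<Rightarrow> bool" where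
  "complete_filter k U \<longleftrightarrow>
     (\<forall>\<A>. \<A> \<subseteq> U \<and> \<A> \<noteq> {} \<and> card_lt \<A> {..<k} \<longrightarrow> \<Inter>\<A> \<in> U)"

text \<open>k is X-compact: a k-complete fine ultrafilter on P_k(X). (For X = lambda
  this is lambda-compactness; the notion only depends on the cardinality of X.)\<close>
definition set_compact :: "'o::wellorder \<Rightarrow> 'b set \<Rightarrow> bool" where
  "set_compact k X \<longleftrightarrow> (\<exists>U. ultrafilter_on (P_kappa k X) U \<and> complete_filter k U \<and>
      (\<forall>a\<in>X. {x \<in> P_kappa k X. a \<in> x} \<in> U))"

text \<open>Nodes are partial maps 'o => 'a option whose domain is an ordinal.\<close>

definition is_tree :: "('o::wellorder \<Rightarrow> 'a option) set \<Rightarrow> bool" where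
  "is_tree T \<longleftrightarrow> (\<forall>f\<in>T. \<exists>a. dom f = {..<a}) \<and>
     (\<forall>f\<in>T. \<forall>b. {..<b} \<subseteq> dom f \<longrightarrow> f |` {..<b} \<in> T)"

definition tree_less :: "('o \<Rightarrow> 'a option) \<Rightarrow> ('o \<Rightarrow> 'a option) \<Rightarrow> bool" where
  "tree_less f g \<longleftrightarrow> f \<subseteq>\<^sub>m g \<and> f \<noteq> g"

definition level :: "('o::wellorder \<Rightarrow> 'a option) set \<Rightarrow> 'o \<Rightarrow> ('o \<Rightarrow> 'a option) set" where
  "level T a = {f \<in> T. dom f = {..<a}}"

definition below :: "('o::wellorder \<Rightarrow> 'a option) set \<Rightarrow> 'o \<Rightarrow> ('o \<Rightarrow> 'a option) set" where
  "below T a = {f \<in> T. \<exists>b<a. dom f = {..<b}}"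

definition level_nonstationary :: "('o::wellorder \<Rightarrow> 'a option) set \<Rightarrow> 'o \<Rightarrow> bool" where
  "level_nonstationary T a \<longleftrightarrow> (\<exists>F. (\<forall>x\<in>level T a. F x \<in> below T a \<and> tree_less (F x) x) \<and>
     (\<forall>x\<in>level T a. \<forall>y\<in>level T a. x \<noteq> y \<longrightarrow>
        \<not> tree_less (F x) y \<or> \<not> tree_less (F y) x))"

definition has_height :: "('o::wellorder \<Rightarrow> 'a option) set \<Rightarrow> 'o \<Rightarrow> bool" where
  "has_height T l \<longleftrightarrow> (\<forall>f\<in>T. \<exists>a<l. dom f = {..<a}) \<and> (\<forall>a<l. level T a \<noteq> {})"

definition regressive :: "'o::wellorder \<Rightarrow> ('o \<Rightarrow> 'a option) set \<Rightarrow> 'o \<Rightarrow> bool" where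
  "regressive k T l \<longleftrightarrow> is_tree T \<and> has_height T l \<and>
     (\<forall>a<l. is_limit a \<and> cf_less a k \<longrightarrow> level_nonstationary T a)"

definition cofinal_branches :: "('o::wellorder \<Rightarrow> 'a option) set \<Rightarrow> 'o \<Rightarrow> ('o \<Rightarrow> 'a option) set" where
  "cofinal_branches T l = {b. dom b = {..<l} \<and> (\<forall>a<l. b |` {..<a} \<in> T)}"

definition weak_kurepa :: "('o::wellorder \<Rightarrow> 'a option) set \<Rightarrow> 'o \<Rightarrow> bool" where
  "weak_kurepa T l \<longleftrightarrow> is_tree T \<and> has_height T l \<and>
     (\<forall>a<l. card_le (level T a) {..<l}) \<and> card_lt {..<l} (cofinal_branches T l)"

end

theory Submission
  imports Defs
begin

(* Compactness of kappa yields a countably complete fine ultrafilter F on the subsets of lambda of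
   size < kappa. Its ultrapower is well-founded, so there is an F-least g above all constants
   alpha < lambda; for F-almost every s, g(s) < lambda is a limit ordinal in which s is cofinal,
   so regressivity gives a witness G_s of non-stationarity of level g(s). For a cofinal branch b,
   G_s(b|g(s)) is an initial segment of b of height below g(s), so by minimality of g its height
   is F-almost always at most some alpha_b < lambda. There are more than lambda branches but only
   lambda pairs (alpha_b, b|alpha_b), so two distinct branches b, b' share them. At an s where b
   and b' already differ below g(s), G_s maps both b|g(s) and b'|g(s) below their common initial
   segment b|alpha_b, which a witness of non-stationarity cannot do. *)

section \<open>Cardinality comparisons\<close>

lemma card_le_trans [trans]:
  assumes "card_le A B" and "card_le B C"
  shows "card_le A C"
proof -
  obtain f g where "inj_on f A" "f ` A \<subseteq> B" "inj_on g B" "g ` B \<subseteq> C"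
    using assms unfolding card_le_def by blast
  then have "inj_on (g \<circ> f) A \<and> (g \<circ> f) ` A \<subseteq> C"
    by (auto intro: comp_inj_on inj_on_subset)
  then show ?thesis
    unfolding card_le_def by blast
qed

lemma card_le_subset: "A \<subseteq> B \<Longrightarrow> card_le A B"
  unfolding card_le_def by (rule exI[of _ id]) auto

lemma card_le_lt_trans: "card_le A B \<Longrightarrow> card_lt B C \<Longrightarrow> card_lt A C"
  unfolding card_lt_def by (meson card_le_trans)

lemma card_lt_le_trans: "card_lt A B \<Longrightarrow> card_le B C \<Longrightarrow> card_lt A C"
  unfolding card_lt_def by (meson card_le_trans)

lemma card_le_image: "card_le (f ` A) A"
  unfolding card_le_def by (auto intro!: exI[of _ "inv_into A f"] inj_on_inv_into inv_into_into)

lemma card_le_finite_nat: "finite A \<Longrightarrow> card_le A (UNIV :: nat set)"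
  unfolding card_le_def by (meson finite_imp_inj_to_nat_seg top_greatest)

lemma card_le_nat_infinite: "infinite A \<Longrightarrow> card_le (UNIV :: nat set) A"
  unfolding card_le_def by (meson infinite_countable_subset)

lemma card_le_Times_infinite: "infinite A \<Longrightarrow> card_le (A \<times> A) A"
  unfolding card_le_def
  using card_of_ordIso[THEN iffD2, OF card_of_Times_same_infinite] bij_betw_def by (metis equalityE)

lemma card_le_Sigma:
  assumes "\<And>a. a \<in> A \<Longrightarrow> card_le (B a) C"
  shows "card_le (Sigma A B) (A \<times> C)"
proof -
  obtain e where e: "\<And>a. a \<in> A \<Longrightarrow> inj_on (e a) (B a) \<and> e a ` B a \<subseteq> C"
    using assms unfolding card_le_def by metis
  have "inj_on (\<lambda>(a, f). (a, e a f)) (Sigma A B)"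
    using e by (auto simp: inj_on_def)
  moreover have "(\<lambda>(a, f). (a, e a f)) ` Sigma A B \<subseteq> A \<times> C"
    using e by auto
  ultimately show ?thesis
    unfolding card_le_def by blast
qed

lemma uncountable_ord_infinite: "uncountable_ord k \<Longrightarrow> infinite {..<k}"
  unfolding uncountable_ord_def using card_le_finite_nat by blast

lemma card_lt_range_nat:
  assumes "uncountable_ord k"
  shows "card_lt (range (A :: nat \<Rightarrow> 'b)) {..<k}"
proof -
  have "card_le (range A) {..<k}"
    using card_le_trans[OF card_le_image card_le_nat_infinite] uncountable_ord_infinite[OF assms] by blast
  moreover have "\<not> card_le {..<k} (range A)"
    using assms card_le_trans[OF _ card_le_image] unfolding uncountable_ord_def by blast
  ultimately show ?thesis
    unfolding card_lt_def by blast
qed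

lemma regular_cardinal_is_limit:
  assumes "regular_cardinal l" and "infinite {..<l}"
  shows "is_limit l"
  unfolding is_limit_def
proof (intro conjI allI impI)
  show "\<exists>b. b < l"
    using assms(1) unfolding regular_cardinal_def by blast
  fix b
  assume "b < l"
  show "\<exists>c. b < c \<and> c < l"
  proof (rule ccontr)
    assume "\<not> ?thesis"
    then have "cofinal_in {b} l"
      using \<open>b < l\<close> unfolding cofinal_in_def by (auto simp: not_less)
    then have "card_le {..<l} {b}"
      using assms(1) unfolding regular_cardinal_def by blast
    then obtain f where "inj_on f {..<l}" "f ` {..<l} \<subseteq> {b}"
      unfolding card_le_def by blast
    then show False
      using assms(2) finite_imageD finite_subset by blast
  qed
qed

lemma regular_cardinal_bounded:
  assumes "regular_cardinal l" and "s \<subseteq> {..<l}" and "card_lt s {..<l}"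
  shows "\<exists>\<beta><l. \<forall>\<xi>\<in>s. \<xi> < \<beta>"
proof (rule ccontr)
  assume "\<not> ?thesis"
  then have "cofinal_in s l"
    using assms(2) unfolding cofinal_in_def by (meson leI)
  then have "card_le {..<l} s"
    using assms(1) unfolding regular_cardinal_def by blast
  then show False
    using assms(3) unfolding card_lt_def by blast
qed

section \<open>Countably complete ultrafilters\<close>

definition set_filter :: "'c set \<Rightarrow> 'c set set \<Rightarrow> 'c filter" where
  "set_filter S U = Abs_filter (\<lambda>P. {x \<in> S. P x} \<in> U)"

lemma ultrafilter_onD:
  assumes "ultrafilter_on S U"
  shows "S \<in> U" and "{} \<notin> U"
    and "A \<in> U \<Longrightarrow> A \<subseteq> B \<Longrightarrow> B \<subseteq> S \<Longrightarrow> B \<in> U"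
    and "A \<in> U \<Longrightarrow> B \<in> U \<Longrightarrow> A \<inter> B \<in> U"
    and "A \<subseteq> S \<Longrightarrow> A \<notin> U \<Longrightarrow> S - A \<in> U"
  using assms unfolding ultrafilter_on_def by blast+

lemma complete_filterD:
  assumes "complete_filter k U" and "\<A> \<subseteq> U" and "\<A> \<noteq> {}" and "card_lt \<A> {..<k}"
  shows "\<Inter> \<A> \<in> U"
  using assms unfolding complete_filter_def by blast

lemma eventually_set_filter:
  assumes "ultrafilter_on S U"
  shows "eventually P (set_filter S U) \<longleftrightarrow> {x \<in> S. P x} \<in> U"
proof -
  have "is_filter (\<lambda>P. {x \<in> S. P x} \<in> U)"
  proof
    show "{x \<in> S. True} \<in> U"
      using ultrafilter_onD(1)[OF assms] by simp
  next
    fix P Q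
    assume "{x \<in> S. P x} \<in> U" and "{x \<in> S. Q x} \<in> U"
    then have "{x \<in> S. P x} \<inter> {x \<in> S. Q x} \<in> U"
      by (rule ultrafilter_onD(4)[OF assms])
    then show "{x \<in> S. P x \<and> Q x} \<in> U"
      by (simp add: Collect_conj_eq Int_assoc Int_left_commute)
  next
    fix P Q
    assume "\<forall>x. P x \<longrightarrow> Q x" and "{x \<in> S. P x} \<in> U"
    then show "{x \<in> S. Q x} \<in> U"
      using ultrafilter_onD(3)[OF assms, of "{x \<in> S. P x}" "{x \<in> S. Q x}"] by blast
  qed
  then show ?thesis
    unfolding set_filter_def by (rule eventually_Abs_filter)
qed

locale countably_complete_ultrafilter =
  fixes F :: "'c filter"
  assumes proper: "F \<noteq> bot"
    and ultra: "\<not> eventually P F \<Longrightarrow> eventually (\<lambda>x. \<not> P x) F"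
    and countably_complete: "(\<And>i::nat. eventually (Q i) F) \<Longrightarrow> eventually (\<lambda>x. \<forall>i. Q i x) F"

lemma countably_complete_ultrafilter_set_filter:
  assumes U: "ultrafilter_on S U" and "complete_filter k U" and "uncountable_ord k"
  shows "countably_complete_ultrafilter (set_filter S U)"
proof
  from ultrafilter_onD(2)[OF U] show "set_filter S U \<noteq> bot"
    unfolding eventually_False[symmetric] eventually_set_filter[OF U] by simp
next
  fix P
  assume "\<not> eventually P (set_filter S U)"
  then have "S - {x \<in> S. P x} \<in> U"
    unfolding eventually_set_filter[OF U] by (intro ultrafilter_onD(5)[OF U]) auto
  moreover have "S - {x \<in> S. P x} = {x \<in> S. \<not> P x}"
    by blast
  ultimately show "eventually (\<lambda>x. \<not> P x) (set_filter S U)"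
    unfolding eventually_set_filter[OF U] by simp
next
  fix P :: "nat \<Rightarrow> 'a \<Rightarrow> bool"
  assume "\<And>i. eventually (P i) (set_filter S U)"
  then have "range (\<lambda>i. {x \<in> S. P i x}) \<subseteq> U"
    unfolding eventually_set_filter[OF U] by blast
  moreover have "card_lt (range (\<lambda>i. {x \<in> S. P i x})) {..<k}"
    by (rule card_lt_range_nat[OF assms(3)])
  ultimately have "\<Inter> (range (\<lambda>i. {x \<in> S. P i x})) \<in> U"
    using complete_filterD[OF assms(2)] by blast
  moreover have "\<Inter> (range (\<lambda>i. {x \<in> S. P i x})) = {x \<in> S. \<forall>i. P i x}"
    by auto
  ultimately show "eventually (\<lambda>x. \<forall>i. P i x) (set_filter S U)"
    unfolding eventually_set_filter[OF U] by simp
qed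

context countably_complete_ultrafilter
begin

lemma countably_complete_ultrafilter_filtermap:
  "countably_complete_ultrafilter (filtermap f F)"
proof
  show "filtermap f F \<noteq> bot"
    by (simp add: filtermap_bot_iff proper)
next
  fix P
  assume "\<not> eventually P (filtermap f F)"
  then show "eventually (\<lambda>x. \<not> P x) (filtermap f F)"
    unfolding eventually_filtermap by (rule ultra)
next
  fix Q
  assume "\<And>i::nat. eventually (Q i) (filtermap f F)"
  then show "eventually (\<lambda>x. \<forall>i. Q i x) (filtermap f F)"
    unfolding eventually_filtermap by (rule countably_complete)
qed

lemma wf_eventually_less: "wf {(h, g). \<forall>\<^sub>F x in F. h x < (g x :: 'o::wellorder)}"
  unfolding wf_iff_no_infinite_down_chain
proof
  assume "\<exists>f. \<forall>i. (f (Suc i), f i) \<in> {(h, g). \<forall>\<^sub>F x in F. h x < (g x :: 'o)}"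
  then obtain f :: "nat \<Rightarrow> 'c \<Rightarrow> 'o" where "\<And>i. \<forall>\<^sub>F x in F. f (Suc i) x < f i x"
    by auto
  then have "\<forall>\<^sub>F x in F. \<forall>i. f (Suc i) x < f i x"
    by (rule countably_complete)
  then obtain x where "\<forall>i. f (Suc i) x < f i x"
    by (rule eventually_happens'[OF proper, elim_format]) blast
  then have "\<exists>s. \<forall>i. (s (Suc i), s i) \<in> {(a, b :: 'o). a < b}"
    by (intro exI[of _ "\<lambda>i. f i x"]) simp
  then show False
    using wf_iff_no_infinite_down_chain[THEN iffD1, OF wf] by blast
qed

end

lemma set_compact_fine_ultrafilter:
  fixes k l :: "'o::wellorder"
  assumes "set_compact k X" and "card_le {..<l} X" and "uncountable_ord k"
  obtains F :: "'o set filter" where "countably_complete_ultrafilter F"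
    and "\<And>\<alpha>. \<alpha> < l \<Longrightarrow> \<forall>\<^sub>F s in F. \<alpha> \<in> s"
    and "\<forall>\<^sub>F s in F. s \<subseteq> {..<l}" and "\<forall>\<^sub>F s in F. card_lt s {..<k}"
proof -
  obtain t where t: "inj_on t {..<l}" "t ` {..<l} \<subseteq> X"
    using assms(2) unfolding card_le_def by blast
  obtain U where U: "ultrafilter_on (P_kappa k X) U" "complete_filter k U"
    and fine: "\<And>a. a \<in> X \<Longrightarrow> {x \<in> P_kappa k X. a \<in> x} \<in> U"
    using assms(1) unfolding set_compact_def by blast
  define preimage where "preimage x = {\<alpha>. \<alpha> < l \<and> t \<alpha> \<in> x}" for x
  define F where "F = filtermap preimage (set_filter (P_kappa k X) U)"
  note eventually_F = eventually_filtermap eventually_set_filter[OF U(1)]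
  interpret countably_complete_ultrafilter "set_filter (P_kappa k X) U"
    using countably_complete_ultrafilter_set_filter[OF U assms(3)] .
  have card_preimage: "card_lt (preimage x) {..<k}" if "x \<in> P_kappa k X" for x
  proof -
    have "card_le (preimage x) x"
      unfolding card_le_def preimage_def using t(1) by (intro exI[of _ t]) (auto intro: inj_on_subset)
    moreover have "card_lt x {..<k}"
      using that unfolding P_kappa_def by blast
    ultimately show ?thesis
      by (rule card_le_lt_trans)
  qed
  have "{x \<in> P_kappa k X. preimage x \<subseteq> {..<l}} = P_kappa k X"
    and "{x \<in> P_kappa k X. card_lt (preimage x) {..<k}} = P_kappa k X"
    using card_preimage unfolding preimage_def by auto
  then have "\<forall>\<^sub>F s in F. s \<subseteq> {..<l}" and "\<forall>\<^sub>F s in F. card_lt s {..<k}"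
    using ultrafilter_onD(1)[OF U(1)] unfolding F_def eventually_F by simp_all
  moreover have "countably_complete_ultrafilter F"
    unfolding F_def by (rule countably_complete_ultrafilter_filtermap)
  moreover have "\<forall>\<^sub>F s in F. \<alpha> \<in> s" if "\<alpha> < l" for \<alpha>
    using fine t(2) that unfolding F_def eventually_F preimage_def by auto
  ultimately show ?thesis
    using that by blast
qed

section \<open>The least function above the constants\<close>

definition unbounded_below :: "'c filter \<Rightarrow> 'o::wellorder \<Rightarrow> ('c \<Rightarrow> 'o) \<Rightarrow> bool" where
  "unbounded_below F l g \<longleftrightarrow> (\<forall>\<alpha><l. \<forall>\<^sub>F x in F. \<alpha> < g x) \<and> (\<forall>\<^sub>F x in F. g x < l)"

text \<open>In the ultrapower by \<open>F\<close>, \<open>[g]\<close> is the supremum of the constants below \<open>l\<close>.\<close>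

definition least_unbounded :: "'c filter \<Rightarrow> 'o::wellorder \<Rightarrow> ('c \<Rightarrow> 'o) \<Rightarrow> bool" where
  "least_unbounded F l g \<longleftrightarrow> unbounded_below F l g \<and>
     (\<forall>h. (\<forall>\<^sub>F x in F. h x < g x) \<longrightarrow> (\<exists>\<alpha><l. \<forall>\<^sub>F x in F. h x \<le> \<alpha>))"

lemma exists_unbounded_below:
  fixes F :: "'o::wellorder set filter"
  assumes "regular_cardinal l" and fine: "\<And>\<alpha>. \<alpha> < l \<Longrightarrow> \<forall>\<^sub>F s in F. \<alpha> \<in> s"
    and small: "\<forall>\<^sub>F s in F. s \<subseteq> {..<l} \<and> card_lt s {..<l}"
  shows "\<exists>g. unbounded_below F l g"
proof -
  have "\<forall>\<^sub>F s in F. \<exists>\<beta>. \<beta> < l \<and> (\<forall>\<xi>\<in>s. \<xi> < \<beta>)"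
    using small by eventually_elim (use regular_cardinal_bounded[OF assms(1)] in blast)
  then obtain g where g: "\<forall>\<^sub>F s in F. g s < l \<and> (\<forall>\<xi>\<in>s. \<xi> < g s)"
    unfolding eventually_ex by blast
  have "\<forall>\<^sub>F s in F. \<alpha> < g s" if "\<alpha> < l" for \<alpha>
    using g fine[OF that] by eventually_elim blast
  moreover have "\<forall>\<^sub>F s in F. g s < l"
    using g by eventually_elim blast
  ultimately show ?thesis
    unfolding unbounded_below_def by blast
qed

context countably_complete_ultrafilter
begin

lemma exists_least_unbounded:
  assumes "unbounded_below F l g\<^sub>0"
  shows "\<exists>g. least_unbounded F l g"
proof -
  obtain g where "g \<in> {g. unbounded_below F l g}"
    and "\<And>h. (h, g) \<in> {(h, g). \<forall>\<^sub>F x in F. h x < g x} \<Longrightarrow> h \<notin> {g. unbounded_below F l g}"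
    by (rule wfE_min[OF wf_eventually_less, of g\<^sub>0 "{g. unbounded_below F l g}"]) (use assms in auto)
  then have "unbounded_below F l g"
    and minimal: "\<And>h. (\<forall>\<^sub>F x in F. h x < g x) \<Longrightarrow> \<not> unbounded_below F l h"
    by auto
  then have g_lt: "\<forall>\<^sub>F x in F. g x < l"
    unfolding unbounded_below_def by blast
  have "\<exists>\<alpha><l. \<forall>\<^sub>F x in F. h x \<le> \<alpha>" if h_lt: "\<forall>\<^sub>F x in F. h x < g x" for h
  proof -
    have "\<forall>\<^sub>F x in F. h x < l"
      using h_lt g_lt by eventually_elim (rule less_trans)
    then obtain \<alpha> where "\<alpha> < l" and "\<not> (\<forall>\<^sub>F x in F. \<alpha> < h x)"
      using minimal[OF h_lt] unfolding unbounded_below_def by blast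
    then show ?thesis
      using ultra[of "\<lambda>x. \<alpha> < h x"] by (auto simp: not_less)
  qed
  then show ?thesis
    using \<open>unbounded_below F l g\<close> unfolding least_unbounded_def by blast
qed

lemma least_unbounded_gap:
  assumes "least_unbounded F l g" and "is_limit l" and "\<forall>\<^sub>F x in F. h x < g x"
  shows "\<exists>\<beta><l. \<forall>\<^sub>F x in F. h x < \<beta> \<and> \<beta> < g x"
proof -
  obtain \<alpha> where "\<alpha> < l" and h_le: "\<forall>\<^sub>F x in F. h x \<le> \<alpha>"
    using assms(1,3) unfolding least_unbounded_def by blast
  then obtain \<beta> where "\<alpha> < \<beta>" and "\<beta> < l"
    using assms(2) unfolding is_limit_def by blast
  then have "\<forall>\<^sub>F x in F. \<beta> < g x"
    using assms(1) unfolding least_unbounded_def unbounded_below_def by blast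
  with h_le have "\<forall>\<^sub>F x in F. h x < \<beta> \<and> \<beta> < g x"
    by eventually_elim (use \<open>\<alpha> < \<beta>\<close> in \<open>auto intro: le_less_trans\<close>)
  with \<open>\<beta> < l\<close> show ?thesis
    by blast
qed

lemma least_unbounded_is_limit:
  assumes "least_unbounded F l g" and "is_limit l"
  shows "\<forall>\<^sub>F x in F. is_limit (g x)"
proof (rule ccontr)
  assume "\<not> ?thesis"
  then have not_limit: "\<forall>\<^sub>F x in F. \<not> is_limit (g x)"
    by (rule ultra)
  obtain \<alpha> where "\<alpha> < l"
    using assms(2) unfolding is_limit_def by blast
  then have "\<forall>\<^sub>F x in F. \<alpha> < g x"
    using assms(1) unfolding least_unbounded_def unbounded_below_def by blast
  with not_limit have "\<forall>\<^sub>F x in F. \<exists>p. p < g x \<and> \<not> (\<exists>c. p < c \<and> c < g x)"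
    by eventually_elim (auto simp: is_limit_def)
  then obtain pred where pred: "\<forall>\<^sub>F x in F. pred x < g x \<and> \<not> (\<exists>c. pred x < c \<and> c < g x)"
    unfolding eventually_ex by blast
  then have "\<forall>\<^sub>F x in F. pred x < g x"
    by eventually_elim simp
  then obtain \<beta> where "\<forall>\<^sub>F x in F. pred x < \<beta> \<and> \<beta> < g x"
    using least_unbounded_gap[OF assms] by blast
  with pred have "\<forall>\<^sub>F x in F. False"
    by eventually_elim blast
  then show False
    using proper by (simp add: eventually_False)
qed

lemma least_unbounded_cofinal:
  assumes "least_unbounded F l g" and "is_limit l"
    and fine: "\<And>\<alpha>. \<alpha> < l \<Longrightarrow> \<forall>\<^sub>F x in F. \<alpha> \<in> D x"
  shows "\<forall>\<^sub>F x in F. cofinal_in {\<xi> \<in> D x. \<xi> < g x} (g x)"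
proof (rule ccontr)
  assume "\<not> ?thesis"
  then have "\<forall>\<^sub>F x in F. \<not> cofinal_in {\<xi> \<in> D x. \<xi> < g x} (g x)"
    by (rule ultra)
  then have "\<forall>\<^sub>F x in F. \<exists>p. p < g x \<and> (\<forall>\<xi>\<in>D x. \<xi> < g x \<longrightarrow> \<xi> < p)"
    by eventually_elim (auto simp: cofinal_in_def not_le)
  then obtain bound
    where bound: "\<forall>\<^sub>F x in F. bound x < g x \<and> (\<forall>\<xi>\<in>D x. \<xi> < g x \<longrightarrow> \<xi> < bound x)"
    unfolding eventually_ex by blast
  then have "\<forall>\<^sub>F x in F. bound x < g x"
    by eventually_elim simp
  then obtain \<beta> where "\<beta> < l" and between: "\<forall>\<^sub>F x in F. bound x < \<beta> \<and> \<beta> < g x"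
    using least_unbounded_gap[OF assms(1,2)] by blast
  have "\<forall>\<^sub>F x in F. False"
    using bound fine[OF \<open>\<beta> < l\<close>] between by eventually_elim (meson less_asym)
  then show False
    using proper by (simp add: eventually_False)
qed

lemma least_unbounded_small_cofinality:
  assumes lub: "least_unbounded F l g" and "is_limit l"
    and fine: "\<And>\<alpha>. \<alpha> < l \<Longrightarrow> \<forall>\<^sub>F x in F. \<alpha> \<in> D x"
    and small: "\<forall>\<^sub>F x in F. card_lt (D x) {..<k}"
  shows "\<forall>\<^sub>F x in F. g x < l \<and> is_limit (g x) \<and> cf_less (g x) k"
proof -
  have "\<forall>\<^sub>F x in F. g x < l"
    using lub unfolding least_unbounded_def unbounded_below_def by blast
  moreover have "\<forall>\<^sub>F x in F. is_limit (g x)"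
    using lub \<open>is_limit l\<close> by (rule least_unbounded_is_limit)
  moreover have "\<forall>\<^sub>F x in F. cofinal_in {\<xi> \<in> D x. \<xi> < g x} (g x)"
    using lub \<open>is_limit l\<close> fine by (rule least_unbounded_cofinal)
  ultimately show ?thesis
    using small
  proof eventually_elim
    case (elim x)
    have "card_lt {\<xi> \<in> D x. \<xi> < g x} {..<k}"
      using elim(4) card_le_lt_trans[OF card_le_subset, of "{\<xi> \<in> D x. \<xi> < g x}" "D x"] by blast
    then show ?case
      using elim(1-3) unfolding cf_less_def by blast
  qed
qed

lemma least_unbounded_bounds_below:
  assumes "least_unbounded F l g" and "\<forall>\<^sub>F x in F. \<phi> x \<in> below T (g x) \<and> \<phi> x \<subseteq>\<^sub>m b"
  shows "\<exists>\<alpha><l. \<forall>\<^sub>F x in F. \<phi> x \<subseteq>\<^sub>m b |` {..<\<alpha>}"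
proof -
  from assms(2) have "\<forall>\<^sub>F x in F. \<exists>\<delta>. \<delta> < g x \<and> dom (\<phi> x) = {..<\<delta>}"
    by eventually_elim (auto simp: below_def)
  then obtain ht where ht: "\<forall>\<^sub>F x in F. ht x < g x \<and> dom (\<phi> x) = {..<ht x}"
    unfolding eventually_ex by blast
  then have "\<forall>\<^sub>F x in F. ht x < g x"
    by eventually_elim simp
  then obtain \<alpha> where "\<alpha> < l" and ht_le: "\<forall>\<^sub>F x in F. ht x \<le> \<alpha>"
    using assms(1) unfolding least_unbounded_def by blast
  have "\<forall>\<^sub>F x in F. \<phi> x \<subseteq>\<^sub>m b |` {..<\<alpha>}"
    using ht assms(2) ht_le by eventually_elim (auto simp: map_le_def restrict_map_def dest: less_le_trans)
  with \<open>\<alpha> < l\<close> show ?thesis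
    by blast
qed

end

section \<open>Trees and their cofinal branches\<close>

definition regressive_witness ::
    "('o::wellorder \<Rightarrow> 'a option) set \<Rightarrow> 'o \<Rightarrow> (('o \<Rightarrow> 'a option) \<Rightarrow> ('o \<Rightarrow> 'a option)) \<Rightarrow> bool"
  where
  "regressive_witness T a G \<longleftrightarrow> (\<forall>x\<in>level T a. G x \<in> below T a \<and> tree_less (G x) x) \<and>
     (\<forall>x\<in>level T a. \<forall>y\<in>level T a. x \<noteq> y \<longrightarrow> \<not> tree_less (G x) y \<or> \<not> tree_less (G y) x)"

lemma level_nonstationary_iff: "level_nonstationary T a \<longleftrightarrow> (\<exists>G. regressive_witness T a G)"
  unfolding level_nonstationary_def regressive_witness_def ..

lemma restrict_map_le: "m |` A \<subseteq>\<^sub>m m"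
  by (auto simp: map_le_def)

lemma restrict_map_mono: "A \<subseteq> B \<Longrightarrow> m |` A \<subseteq>\<^sub>m m |` B"
  by (auto simp: map_le_def)

lemma tree_less_cross:
  assumes "tree_less f y" and "f \<subseteq>\<^sub>m c" and "c \<subseteq>\<^sub>m y'" and "dom y = dom y'" and "y \<noteq> y'"
  shows "tree_less f y'"
proof -
  have "f \<noteq> y'"
  proof
    assume "f = y'"
    then have "y' \<subseteq>\<^sub>m y"
      using assms(1) unfolding tree_less_def by simp
    then have "y' = y"
      using assms(4) by (intro map_le_antisym) (auto simp: map_le_def)
    then show False
      using assms(5) by simp
  qed
  moreover have "f \<subseteq>\<^sub>m y'"
    using assms(2,3) by (rule map_le_trans)
  ultimately show ?thesis
    unfolding tree_less_def by blast
qed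

lemma regressive_witness_no_common_segment:
  assumes G: "regressive_witness T a G" and "y \<in> level T a" and "y' \<in> level T a" and "y \<noteq> y'"
    and "G y \<subseteq>\<^sub>m c" and "G y' \<subseteq>\<^sub>m c" and "c \<subseteq>\<^sub>m y" and "c \<subseteq>\<^sub>m y'"
  shows False
proof -
  have "dom y = dom y'"
    using assms(2,3) unfolding level_def by simp
  have "tree_less (G y) y" and "tree_less (G y') y'"
    using G assms(2,3) unfolding regressive_witness_def by blast+
  have "tree_less (G y) y'"
    using \<open>tree_less (G y) y\<close> assms(5,8) \<open>dom y = dom y'\<close> assms(4) by (rule tree_less_cross)
  moreover have "tree_less (G y') y"
    using \<open>tree_less (G y') y'\<close> assms(6,7) \<open>dom y = dom y'\<close>[symmetric] not_sym[OF assms(4)]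
    by (rule tree_less_cross)
  ultimately show False
    using G assms(2-4) unfolding regressive_witness_def by blast
qed

lemma branch_restrict_level:
  assumes "b \<in> cofinal_branches T l" and "a < l"
  shows "b |` {..<a} \<in> level T a"
  using assms unfolding cofinal_branches_def level_def by auto

lemma cofinal_branches_differ:
  assumes "b \<in> cofinal_branches T l" and "b' \<in> cofinal_branches T l" and "b \<noteq> b'"
  obtains z where "z < l" and "b z \<noteq> b' z"
proof -
  obtain z where "b z \<noteq> b' z"
    using assms(3) by (auto simp: fun_eq_iff)
  moreover have "z \<in> dom b \<union> dom b'"
    using calculation unfolding dom_def by auto
  ultimately show ?thesis
    using assms(1,2) that unfolding cofinal_branches_def by auto
qed

lemma weak_kurepa_branches_agree:
  assumes "weak_kurepa T l" and "infinite {..<l}"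
    and ht: "\<And>b. b \<in> cofinal_branches T l \<Longrightarrow> ht b < l"
  obtains b b' where "b \<in> cofinal_branches T l" and "b' \<in> cofinal_branches T l" and "b \<noteq> b'"
    and "ht b' = ht b" and "b' |` {..<ht b} = b |` {..<ht b}"
proof -
  define B where "B = cofinal_branches T l"
  define code where "code b = (ht b, b |` {..<ht b})" for b
  have "\<not> inj_on code B"
  proof
    assume "inj_on code B"
    moreover have "code ` B \<subseteq> Sigma {..<l} (level T)"
      using ht branch_restrict_level unfolding code_def B_def by blast
    ultimately have "card_le B (Sigma {..<l} (level T))"
      unfolding card_le_def by blast
    also have "card_le \<dots> ({..<l} \<times> {..<l})"
      using assms(1) unfolding weak_kurepa_def by (intro card_le_Sigma) auto
    also have "card_le \<dots> {..<l}"
      using assms(2) by (rule card_le_Times_infinite)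
    finally show False
      using assms(1) unfolding weak_kurepa_def card_lt_def B_def by blast
  qed
  then show ?thesis
    using that unfolding inj_on_def code_def B_def by auto
qed

lemma (in countably_complete_ultrafilter) least_unbounded_bounds_branches:
  assumes lub: "least_unbounded F l g" and G: "\<forall>\<^sub>F x in F. regressive_witness T (g x) (G x)"
  obtains ht where "\<And>b. b \<in> cofinal_branches T l \<Longrightarrow> ht b < l"
    and "\<And>b. b \<in> cofinal_branches T l \<Longrightarrow> \<forall>\<^sub>F x in F. G x (b |` {..<g x}) \<subseteq>\<^sub>m b |` {..<ht b}"
proof -
  have g_lt: "\<forall>\<^sub>F x in F. g x < l"
    using lub unfolding least_unbounded_def unbounded_below_def by blast
  have "\<exists>\<alpha><l. \<forall>\<^sub>F x in F. G x (b |` {..<g x}) \<subseteq>\<^sub>m b |` {..<\<alpha>}" if b: "b \<in> cofinal_branches T l" for b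
  proof (rule least_unbounded_bounds_below[OF lub])
    show "\<forall>\<^sub>F x in F. G x (b |` {..<g x}) \<in> below T (g x) \<and> G x (b |` {..<g x}) \<subseteq>\<^sub>m b"
      using G g_lt
    proof eventually_elim
      case (elim x)
      then have "b |` {..<g x} \<in> level T (g x)"
        using branch_restrict_level b by blast
      with elim(1) have "G x (b |` {..<g x}) \<in> below T (g x)"
        and "G x (b |` {..<g x}) \<subseteq>\<^sub>m b |` {..<g x}"
        unfolding regressive_witness_def tree_less_def by blast+
      then show ?case
        using restrict_map_le map_le_trans by blast
    qed
  qed
  then have "\<exists>ht. \<forall>b\<in>cofinal_branches T l.
      ht b < l \<and> (\<forall>\<^sub>F x in F. G x (b |` {..<g x}) \<subseteq>\<^sub>m b |` {..<ht b})"
    by (intro bchoice) blast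
  then show ?thesis
    using that by blast
qed

lemma (in countably_complete_ultrafilter) weak_kurepa_not_eventually_nonstationary:
  assumes lub: "least_unbounded F l g" and "infinite {..<l}" and kurepa: "weak_kurepa T l"
    and nonstationary: "\<forall>\<^sub>F x in F. level_nonstationary T (g x)"
  shows False
proof -
  define B where "B = cofinal_branches T l"
  obtain G where G: "\<forall>\<^sub>F x in F. regressive_witness T (g x) (G x)"
    using nonstationary unfolding level_nonstationary_iff eventually_ex by blast
  obtain ht where ht: "\<And>b. b \<in> B \<Longrightarrow> ht b < l"
    and G_below: "\<And>b. b \<in> B \<Longrightarrow> \<forall>\<^sub>F x in F. G x (b |` {..<g x}) \<subseteq>\<^sub>m b |` {..<ht b}"
    using least_unbounded_bounds_branches[OF lub G] unfolding B_def by blast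
  obtain b b' where "b \<in> B" and "b' \<in> B" and "b \<noteq> b'" and "ht b' = ht b"
    and agree: "b' |` {..<ht b} = b |` {..<ht b}"
    using weak_kurepa_branches_agree[OF kurepa \<open>infinite {..<l}\<close>, of ht] ht unfolding B_def by blast
  obtain z where "z < l" and "b z \<noteq> b' z"
    using \<open>b \<in> B\<close> \<open>b' \<in> B\<close> \<open>b \<noteq> b'\<close> unfolding B_def by (rule cofinal_branches_differ)
  have "\<forall>\<^sub>F x in F. z < g x" and "\<forall>\<^sub>F x in F. ht b < g x" and "\<forall>\<^sub>F x in F. g x < l"
    using lub \<open>z < l\<close> ht[OF \<open>b \<in> B\<close>] unfolding least_unbounded_def unbounded_below_def by blast+
  then have "\<forall>\<^sub>F x in F. False"
    using G G_below[OF \<open>b \<in> B\<close>] G_below[OF \<open>b' \<in> B\<close>]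
  proof eventually_elim
    case (elim x)
    define y y' where "y = b |` {..<g x}" and "y' = b' |` {..<g x}"
    have levels: "y \<in> level T (g x)" "y' \<in> level T (g x)"
      using branch_restrict_level \<open>b \<in> B\<close> \<open>b' \<in> B\<close> elim(3) unfolding y_def y'_def B_def by blast+
    have "y z \<noteq> y' z"
      using \<open>b z \<noteq> b' z\<close> elim(1) unfolding y_def y'_def by simp
    then have "y \<noteq> y'"
      by auto
    have "b |` {..<ht b} \<subseteq>\<^sub>m y"
      using elim(2) unfolding y_def by (simp add: restrict_map_mono)
    moreover have "b |` {..<ht b} \<subseteq>\<^sub>m y'"
      using elim(2) unfolding y'_def agree[symmetric] by (simp add: restrict_map_mono)
    ultimately have common: "b |` {..<ht b} \<subseteq>\<^sub>m y" "b |` {..<ht b} \<subseteq>\<^sub>m y'" .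
    have regressive: "G x y \<subseteq>\<^sub>m b |` {..<ht b}" "G x y' \<subseteq>\<^sub>m b |` {..<ht b}"
      using elim(5,6) agree \<open>ht b' = ht b\<close> unfolding y_def y'_def by simp_all
    show False
      by (rule regressive_witness_no_common_segment[OF elim(4) levels \<open>y \<noteq> y'\<close> regressive common])
  qed
  then show False
    using proper by (simp add: eventually_False)
qed

text \<open>The compactness hypothesis of the theorem only concerns sets of nodes, into which \<open>l\<close>
  is embedded here.\<close>

lemma card_le_lessThan_partial_maps:
  fixes l :: "'o::linorder"
  shows "card_le {..<l} (UNIV :: ('o \<Rightarrow> 'a option) set)"
proof -
  define t :: "'o \<Rightarrow> 'o \<Rightarrow> 'a option" where "t \<alpha> = (\<lambda>_. Some undefined) |` {..<\<alpha>}" for \<alpha>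
  have dom_t: "dom (t \<alpha>) = {..<\<alpha>}" for \<alpha>
    unfolding t_def by (auto simp: restrict_map_def split: if_splits)
  have "inj t"
  proof (rule injI)
    fix \<alpha> \<beta>
    assume "t \<alpha> = t \<beta>"
    then have "dom (t \<alpha>) = dom (t \<beta>)"
      by simp
    then show "\<alpha> = \<beta>"
      unfolding dom_t by simp
  qed
  then show ?thesis
    unfolding card_le_def by (blast intro: inj_on_subset)
qed

theorem theorem7:
  fixes k l :: "'o::wellorder"
    and T :: "('o \<Rightarrow> 'a option) set"
  assumes "is_cardinal k" and "uncountable_ord k"
    and "\<And>X :: ('o \<Rightarrow> 'a option) set. set_compact k X"
    and "k \<le> l" and "regular_cardinal l"
  shows "\<not> (regressive k T l \<and> weak_kurepa T l)"
proof
  assume "regressive k T l \<and> weak_kurepa T l"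
  then have regressive: "\<And>a. a < l \<Longrightarrow> is_limit a \<Longrightarrow> cf_less a k \<Longrightarrow> level_nonstationary T a"
    and kurepa: "weak_kurepa T l"
    unfolding regressive_def by blast+
  have "{..<k} \<subseteq> {..<l}"
    using \<open>k \<le> l\<close> by auto
  then have "infinite {..<l}"
    using uncountable_ord_infinite[OF assms(2)] finite_subset by blast
  then have "is_limit l"
    by (rule regular_cardinal_is_limit[OF assms(5)])
  obtain F :: "'o set filter" where "countably_complete_ultrafilter F"
    and fine: "\<And>\<alpha>. \<alpha> < l \<Longrightarrow> \<forall>\<^sub>F s in F. \<alpha> \<in> s"
    and bounded: "\<forall>\<^sub>F s in F. s \<subseteq> {..<l}" and small: "\<forall>\<^sub>F s in F. card_lt s {..<k}"
    using set_compact_fine_ultrafilter[OF assms(3) card_le_lessThan_partial_maps[of l] assms(2)] by blast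
  interpret countably_complete_ultrafilter F by fact
  have "\<forall>\<^sub>F s in F. s \<subseteq> {..<l} \<and> card_lt s {..<l}"
    using bounded small by eventually_elim (use card_lt_le_trans card_le_subset[OF \<open>{..<k} \<subseteq> {..<l}\<close>] in blast)
  then obtain g\<^sub>0 where "unbounded_below F l g\<^sub>0"
    using exists_unbounded_below[OF assms(5) fine] by blast
  then obtain g where g: "least_unbounded F l g"
    using exists_least_unbounded by blast
  have "\<forall>\<^sub>F s in F. g s < l \<and> is_limit (g s) \<and> cf_less (g s) k"
    using g \<open>is_limit l\<close> fine small by (rule least_unbounded_small_cofinality)
  then have "\<forall>\<^sub>F s in F. level_nonstationary T (g s)"
    by eventually_elim (use regressive in blast)
  then show False
    by (rule weak_kurepa_not_eventually_nonstationary[OF g \<open>infinite {..<l}\<close> kurepa])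
qed

end
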